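(* Let $m\ge1$, $\alpha\in(0,1)$, let $F_1,\dots,F_m:[0,1]\to[0,1]$ and fix $t\in[0,1]$. Let $(F(t))_{(1)}\ge\dots\ge(F(t))_{(m)}$ denote the values $F_1(t),\dots,F_m(t)$ sorted decreasingly and, for $1\le j\le m$, $\tilde F_j(t)=1-\big(\prod_{j'=1}^{j}(1-(F(t))_{(j')})\big)^{1/j}$. For $\ell\in\{1,\dots,m\}$ and $i\in\{1,\dots,\lfloor\alpha\ell\rfloor+1\}$ consider $$Q(\ell,i)=P\Big(\mathbf{Bin}\big[m-\ell+i,\tilde F_{m-\ell+i}(t)\big]\ge i\Big)=P\Big(\mathbf{Bin}\big[m-\ell+i,1-\tilde F_{m-\ell+i}(t)\big]\le m-\ell\Big).$$ Then $Q(\ell,i)$ is non-increasing in $i\in\{1,\dots,\lfloor\alpha\ell\rfloor+1\}$ and non-increasing in $\ell\in\{1,\dots,m\}$.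
   Context: $\mathbf{Bin}[n,p]$ denotes a binomial random variable with $n$ trials and success probability $p$. *)

theory Defs
  imports "HOL-Probability.Probability"
begin

definition sorted_F :: "(nat \<Rightarrow> real \<Rightarrow> real) \<Rightarrow> nat \<Rightarrow> real \<Rightarrow> nat \<Rightarrow> real" where
  "sorted_F F m t j = rev (sort (map (\<lambda>i. F i t) [1..<m+1])) ! (j - 1)"

definition tilde_F :: "(nat \<Rightarrow> real \<Rightarrow> real) \<Rightarrow> nat \<Rightarrow> real \<Rightarrow> nat \<Rightarrow> real" where
  "tilde_F F m t j = 1 - root j (\<Prod>j'=1..j. 1 - sorted_F F m t j')"

definition Q :: "(nat \<Rightarrow> real \<Rightarrow> real) \<Rightarrow> nat \<Rightarrow> real \<Rightarrow> nat \<Rightarrow> nat \<Rightarrow> real" where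
  "Q F m t l i = measure_pmf.prob (binomial_pmf (m - l + i) (tilde_F F m t (m - l + i))) {i..}"

end

theory Submission
  imports Defs
begin

text \<open>
  Write n = m - l + i and p_n = tilde_F F m t n, so that Q(l,i) = P(Bin[n, p_n] >= i).
  Here 1 - p_n is the geometric mean of the first n of the factors 1 - (F(t))_(j), which
  increase with j; hence the mean increases with n and p_n decreases.

  Raising i by one adds one trial and asks for one more success, while the success
  probability drops from p_n to p_(n+1): the tail drops.

  Lowering l by one adds one trial at the same threshold i. With 1 - p_n = s^(n+1) one
  gets 1 - p_(n+1) <= s^n, so it suffices that Bin[n, 1 - s^(n+1)] is stochastically
  dominated by Bin[n+1, 1 - s^n]. Viewing both as sums of independent Bernoulli variables
  (the second padded by a trial that never succeeds), one passes from one to the other in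
  n steps, each replacing a pair of success probabilities (1 - s^k, 1 - s^(n+1)) by
  (1 - s^(k+1), 1 - s^n). This keeps the probability that both fail and raises the
  probability that both succeed, which can only raise every tail.
\<close>

text \<open>\<open>pbin_tail ps i\<close> is the probability that at least \<open>i\<close> of a family of independent
  events with probabilities \<open>ps\<close> occur.\<close>
fun pbin_tail :: "real list \<Rightarrow> nat \<Rightarrow> real" where
  "pbin_tail [] i = (if i = 0 then 1 else 0)"
| "pbin_tail (p # ps) 0 = 1"
| "pbin_tail (p # ps) (Suc i) = p * pbin_tail ps i + (1 - p) * pbin_tail ps (Suc i)"

lemma pbin_tail_0 [simp]: "pbin_tail ps 0 = 1"
  by (cases ps) auto

lemma pbin_tail_Suc_le:
  assumes "set ps \<subseteq> {0..1}"
  shows "pbin_tail ps (Suc i) \<le> pbin_tail ps i"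
  using assms
proof (induction ps arbitrary: i)
  case Nil
  then show ?case by simp
next
  case (Cons p ps)
  have p: "0 \<le> p" "p \<le> 1" and IH: "\<And>i. pbin_tail ps (Suc i) \<le> pbin_tail ps i"
    using Cons by auto
  show ?case
  proof (cases i)
    case 0
    have "p * 1 + (1 - p) * pbin_tail ps 1 \<le> p * 1 + (1 - p) * 1"
      using p IH[of 0] by (intro add_left_mono mult_left_mono) auto
    then show ?thesis using 0 by simp
  next
    case (Suc k)
    have "p * pbin_tail ps (Suc k) + (1 - p) * pbin_tail ps (Suc (Suc k))
          \<le> p * pbin_tail ps k + (1 - p) * pbin_tail ps (Suc k)"
      using p IH by (intro add_mono mult_left_mono) auto
    then show ?thesis using Suc by simp
  qed
qed

lemma pbin_tail_mono:
  assumes "list_all2 (\<le>) ps qs" and "set ps \<subseteq> {0..1}" and "set qs \<subseteq> {0..1}"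
  shows "pbin_tail ps i \<le> pbin_tail qs i"
  using assms
proof (induction ps qs arbitrary: i rule: list_all2_induct)
  case Nil
  then show ?case by simp
next
  case (Cons p ps q qs)
  show ?case
  proof (cases i)
    case 0
    then show ?thesis by simp
  next
    case (Suc k)
    have pq: "0 \<le> p" "p \<le> q" "q \<le> 1" using Cons by auto
    have IH: "pbin_tail ps k \<le> pbin_tail qs k" "pbin_tail ps (Suc k) \<le> pbin_tail qs (Suc k)"
      using Cons by auto
    have qs_dec: "pbin_tail qs (Suc k) \<le> pbin_tail qs k"
      using Cons.prems by (intro pbin_tail_Suc_le) auto
    have "p * pbin_tail ps k + (1 - p) * pbin_tail ps (Suc k)
          \<le> p * pbin_tail qs k + (1 - p) * pbin_tail qs (Suc k)"
      using pq IH by (intro add_mono mult_left_mono) auto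
    also have "\<dots> = pbin_tail qs (Suc k) + p * (pbin_tail qs k - pbin_tail qs (Suc k))"
      by algebra
    also have "\<dots> \<le> pbin_tail qs (Suc k) + q * (pbin_tail qs k - pbin_tail qs (Suc k))"
      using pq qs_dec by (intro add_left_mono mult_right_mono) auto
    also have "\<dots> = q * pbin_tail qs k + (1 - q) * pbin_tail qs (Suc k)"
      by algebra
    finally show ?thesis using Suc by simp
  qed
qed

lemma pbin_tail_remove1:
  assumes "x \<in> set ps"
  shows "pbin_tail ps i = pbin_tail (x # remove1 x ps) i"
  using assms
proof (induction ps arbitrary: i)
  case Nil
  then show ?case by simp
next
  case (Cons y ps)
  show ?case
  proof (cases "x = y")
    case True
    then show ?thesis by simp
  next
    case False
    then have IH: "pbin_tail ps j = pbin_tail (x # remove1 x ps) j" for j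
      using Cons by simp
    have swap: "pbin_tail (y # x # qs) j = pbin_tail (x # y # qs) j" for qs j
      by (cases j; cases "j - 1") (auto simp: algebra_simps)
    have "pbin_tail (y # ps) i = pbin_tail (y # x # remove1 x ps) i"
      by (cases i) (simp_all add: IH)
    also have "\<dots> = pbin_tail (x # y # remove1 x ps) i"
      by (rule swap)
    finally show ?thesis using False by simp
  qed
qed

lemma pbin_tail_perm:
  assumes "mset ps = mset qs"
  shows "pbin_tail ps i = pbin_tail qs i"
  using assms
proof (induction ps arbitrary: qs i)
  case Nil
  then show ?case by simp
next
  case (Cons p ps)
  have p: "p \<in> set qs" by (metis Cons.prems list.set_intros(1) set_mset_mset)
  have IH: "pbin_tail ps j = pbin_tail (remove1 p qs) j" for j
    using Cons by (metis add_mset_remove_trivial mset.simps(2) mset_remove1)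
  have "pbin_tail qs i = pbin_tail (p # remove1 p qs) i"
    by (rule pbin_tail_remove1[OF p])
  also have "\<dots> = pbin_tail (p # ps) i"
    by (cases i) (simp_all add: IH)
  finally show ?case by simp
qed

lemma pbin_tail_pair_le:
  assumes "(1 - a) * (1 - b) = (1 - c) * (1 - d)" and "a * b \<le> c * d"
    and "set ps \<subseteq> {0..1}"
  shows "pbin_tail (a # b # ps) i \<le> pbin_tail (c # d # ps) i"
proof -
  consider "i = 0" | "i = 1" | j where "i = Suc (Suc j)"
    by (metis One_nat_def not0_implies_Suc)
  then show ?thesis
  proof cases
    case 1
    then show ?thesis by simp
  next
    case 2
    have "pbin_tail (x # y # ps) i = 1 - (1 - x) * (1 - y) + (1 - x) * (1 - y) * pbin_tail ps 1"
      for x y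
      unfolding 2 by (simp add: algebra_simps)
    then show ?thesis
      using assms(1) by simp
  next
    case (3 j)
    have expand: "pbin_tail (x # y # ps) i = x * y * (pbin_tail ps j - pbin_tail ps (Suc j))
        + (1 - (1 - x) * (1 - y)) * pbin_tail ps (Suc j)
        + (1 - x) * (1 - y) * pbin_tail ps (Suc (Suc j))" for x y
      unfolding 3 by (simp add: algebra_simps)
    have "a * b * (pbin_tail ps j - pbin_tail ps (Suc j))
          \<le> c * d * (pbin_tail ps j - pbin_tail ps (Suc j))"
      using assms pbin_tail_Suc_le[OF assms(3), of j] by (intro mult_right_mono) auto
    then show ?thesis
      unfolding expand assms(1) by simp
  qed
qed

lemma pbin_tail_replicate_le_replicate_Suc:
  fixes s :: real
  assumes s: "0 \<le> s" "s \<le> 1"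
  shows "pbin_tail (replicate n (1 - s ^ Suc n)) i \<le> pbin_tail (replicate (Suc n) (1 - s ^ n)) i"
proof -
  let ?P = "1 - s ^ Suc n" and ?V = "1 - s ^ n"
  have pow: "0 \<le> s ^ k" "s ^ k \<le> 1" for k
    using s by (simp_all add: power_le_one)
  have "pbin_tail (replicate n ?P) i
        \<le> pbin_tail ((1 - s ^ k) # replicate (n - k) ?P @ replicate k ?V) i" if "k \<le> n" for k
    using that
  proof (induction k)
    case 0
    then show ?case by (cases i) simp_all
  next
    case (Suc k)
    let ?rest = "replicate (n - Suc k) ?P @ replicate k ?V"
    have "n - k = Suc (n - Suc k)" using Suc.prems by simp
    then have "pbin_tail (replicate n ?P) i \<le> pbin_tail ((1 - s ^ k) # ?P # ?rest) i"
      using Suc by simp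
    also have "\<dots> \<le> pbin_tail ((1 - s ^ Suc k) # ?V # ?rest) i"
    proof (rule pbin_tail_pair_le)
      show "(1 - (1 - s ^ k)) * (1 - ?P) = (1 - (1 - s ^ Suc k)) * (1 - ?V)"
        by (simp add: power_add[symmetric])
      have "s ^ n * (1 - s) \<le> s ^ k * (1 - s)"
        using Suc.prems s by (intro mult_right_mono power_decreasing) auto
      then show "(1 - s ^ k) * ?P \<le> (1 - s ^ Suc k) * ?V"
        by (simp add: algebra_simps power_add[symmetric])
      show "set ?rest \<subseteq> {0..1}"
        using pow[of n] pow[of "Suc n"] by auto
    qed
    also have "\<dots> =
        pbin_tail ((1 - s ^ Suc k) # replicate (n - Suc k) ?P @ replicate (Suc k) ?V) i"
      by (rule pbin_tail_perm) simp
    finally show ?case .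
  qed
  from this[of n] show ?thesis
    by (simp add: replicate_append_same[symmetric])
qed

lemma prob_binomial_atLeast_Suc:
  assumes p: "0 \<le> p" "p \<le> 1"
  shows "measure_pmf.prob (binomial_pmf (Suc n) p) {Suc i..} =
     p * measure_pmf.prob (binomial_pmf n p) {i..}
     + (1 - p) * measure_pmf.prob (binomial_pmf n p) {Suc i..}"
proof -
  have split: "binomial_pmf (Suc n) p =
      bernoulli_pmf p \<bind> (\<lambda>b. map_pmf (\<lambda>k. (if b then 1 else 0) + k) (binomial_pmf n p))"
    using p by (subst binomial_pmf_Suc) (auto simp: map_pmf_def)
  have shift: "(+) (Suc 0) -` {Suc i..} = {i..}" "(+) (0::nat) -` {Suc i..} = {Suc i..}"
    by auto
  have "emeasure (binomial_pmf (Suc n) p) {Suc i..} =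
      emeasure (binomial_pmf n p) {i..} * ennreal p
      + emeasure (binomial_pmf n p) {Suc i..} * ennreal (1 - p)"
    unfolding split using p by (simp add: shift)
  also have "\<dots> = ennreal (measure_pmf.prob (binomial_pmf n p) {i..} * p
      + measure_pmf.prob (binomial_pmf n p) {Suc i..} * (1 - p))"
    using p by (subst ennreal_plus) (auto simp: measure_pmf.emeasure_eq_measure ennreal_mult)
  finally have "ennreal (measure_pmf.prob (binomial_pmf (Suc n) p) {Suc i..}) = \<dots>"
    by (simp add: measure_pmf.emeasure_eq_measure)
  then have "measure_pmf.prob (binomial_pmf (Suc n) p) {Suc i..} =
      measure_pmf.prob (binomial_pmf n p) {i..} * p
      + measure_pmf.prob (binomial_pmf n p) {Suc i..} * (1 - p)"
    using p by (subst (asm) ennreal_inj) auto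
  then show ?thesis
    by (simp add: mult.commute)
qed

lemma prob_binomial_atLeast_eq_pbin_tail:
  assumes "0 \<le> p" "p \<le> 1"
  shows "measure_pmf.prob (binomial_pmf n p) {i..} = pbin_tail (replicate n p) i"
proof (induction n arbitrary: i)
  case 0
  show ?case
    using assms by (simp add: binomial_pmf_0 indicator_def)
next
  case (Suc n)
  then show ?case
    using prob_binomial_atLeast_Suc[OF assms] by (cases i) simp_all
qed

lemma root_le_root_Suc_mult:
  fixes G a :: real
  assumes "0 < n" "0 \<le> G" "0 \<le> a" "G \<le> a ^ n"
  shows "root n G \<le> root (Suc n) (G * a)"
proof -
  have "root n G = root (n * Suc n) (G ^ Suc n)"
    using assms by (simp only: real_root_mult_exp real_root_power_cancel[OF zero_less_Suc])
  also have "\<dots> \<le> root (n * Suc n) ((G * a) ^ n)"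
  proof (subst real_root_le_iff)
    have "G ^ n * G \<le> G ^ n * a ^ n"
      using assms by (intro mult_left_mono) auto
    then show "G ^ Suc n \<le> (G * a) ^ n"
      by (simp add: power_mult_distrib mult.commute)
  qed (use assms in simp)
  also have "\<dots> = root (Suc n) (G * a)"
    using assms by (simp only: mult.commute[of n] real_root_mult_exp) (simp add: real_root_power_cancel)
  finally show ?thesis .
qed

lemma sorted_F_antimono:
  assumes "1 \<le> j" "j \<le> j'" "j' \<le> m"
  shows "sorted_F F m t j' \<le> sorted_F F m t j"
proof -
  let ?xs = "sort (map (\<lambda>i. F i t) [1..<m+1])"
  have "?xs ! (m - j') \<le> ?xs ! (m - j)"
    using assms by (intro sorted_nth_mono) auto
  then show ?thesis
    unfolding sorted_F_def using assms by (simp add: rev_nth)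
qed

definition sorted_compl_prod :: "(nat \<Rightarrow> real \<Rightarrow> real) \<Rightarrow> nat \<Rightarrow> real \<Rightarrow> nat \<Rightarrow> real" where
  "sorted_compl_prod F m t n = (\<Prod>j = 1..n. 1 - sorted_F F m t j)"

lemma tilde_F_eq_root_sorted_compl_prod:
  "tilde_F F m t n = 1 - root n (sorted_compl_prod F m t n)"
  unfolding tilde_F_def sorted_compl_prod_def ..

lemma sorted_compl_prod_Suc:
  "sorted_compl_prod F m t (Suc n) = sorted_compl_prod F m t n * (1 - sorted_F F m t (Suc n))"
  unfolding sorted_compl_prod_def by simp

context
  fixes F :: "nat \<Rightarrow> real \<Rightarrow> real" and m :: nat and t :: real
  assumes F_unit: "\<forall>k\<in>{1..m}. F k t \<in> {0..1}"
begin

lemma sorted_F_unit: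
  assumes "1 \<le> j" "j \<le> m"
  shows "sorted_F F m t j \<in> {0..1}"
proof -
  let ?xs = "map (\<lambda>i. F i t) [1..<m+1]"
  have "rev (sort ?xs) ! (j - 1) \<in> set (rev (sort ?xs))"
    using assms by (intro nth_mem) simp
  then have "sorted_F F m t j \<in> set ?xs"
    unfolding sorted_F_def by simp
  then show ?thesis
    using F_unit by auto
qed

lemma sorted_compl_prod_unit:
  assumes "n \<le> m"
  shows "sorted_compl_prod F m t n \<in> {0..1}"
  unfolding sorted_compl_prod_def using sorted_F_unit assms
  by (auto intro!: prod_nonneg prod_le_1)

lemma tilde_F_unit:
  assumes "n \<le> m"
  shows "tilde_F F m t n \<in> {0..1}"
  using sorted_compl_prod_unit[OF assms] unfolding tilde_F_eq_root_sorted_compl_prod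
  by (cases "n = 0") (auto simp: real_root_ge_zero)

lemma tilde_F_Suc_le:
  assumes "1 \<le> n" "Suc n \<le> m"
  shows "tilde_F F m t (Suc n) \<le> tilde_F F m t n"
proof -
  define a where "a = 1 - sorted_F F m t (Suc n)"
  have "sorted_compl_prod F m t n \<le> (\<Prod>j = 1..n. a)"
    unfolding sorted_compl_prod_def a_def
    using assms sorted_F_unit sorted_F_antimono[of _ "Suc n" m F t] by (intro prod_mono) auto
  then have "root n (sorted_compl_prod F m t n) \<le> root (Suc n) (sorted_compl_prod F m t n * a)"
    using assms sorted_compl_prod_unit[of n] sorted_F_unit[of "Suc n"] unfolding a_def
    by (intro root_le_root_Suc_mult) auto
  then show ?thesis
    unfolding tilde_F_eq_root_sorted_compl_prod sorted_compl_prod_Suc a_def by simp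
qed

lemma tilde_F_Suc_ge:
  assumes "1 \<le> n" "Suc n \<le> m"
  obtains s where "0 \<le> s" "s \<le> 1" "tilde_F F m t n = 1 - s ^ Suc n"
    "1 - s ^ n \<le> tilde_F F m t (Suc n)"
proof
  let ?G = "sorted_compl_prod F m t n"
  define s where "s = root (Suc n * n) ?G"
  have G: "0 \<le> ?G" "?G \<le> 1"
    using sorted_compl_prod_unit[of n] assms by auto
  show s: "0 \<le> s" "s \<le> 1"
    unfolding s_def using G assms by auto
  have "s ^ Suc n = root n ?G"
    unfolding s_def real_root_mult_exp using G
    by (intro real_root_pow_pos2) (auto simp: real_root_ge_zero)
  then show "tilde_F F m t n = 1 - s ^ Suc n"
    unfolding tilde_F_eq_root_sorted_compl_prod by simp
  have "root (Suc n) (sorted_compl_prod F m t (Suc n)) \<le> root (Suc n) ?G"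
    unfolding sorted_compl_prod_Suc using G sorted_F_unit[of "Suc n"] assms
    by (subst real_root_le_iff) (auto intro: mult_left_le)
  also have "\<dots> = root (Suc n) (root n ?G ^ n)"
    using G assms by (simp add: real_root_pow_pos2)
  also have "\<dots> = s ^ n"
    unfolding s_def real_root_mult_exp by (simp add: real_root_power)
  finally show "1 - s ^ n \<le> tilde_F F m t (Suc n)"
    unfolding tilde_F_eq_root_sorted_compl_prod by simp
qed

lemma Q_eq_pbin_tail:
  assumes "m - l + i \<le> m"
  shows "Q F m t l i = pbin_tail (replicate (m - l + i) (tilde_F F m t (m - l + i))) i"
  unfolding Q_def using tilde_F_unit[OF assms] by (intro prob_binomial_atLeast_eq_pbin_tail) auto

lemma Q_Suc_right_le:
  assumes "1 \<le> i" "i < l" "l \<le> m"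
  shows "Q F m t l (Suc i) \<le> Q F m t l i"
proof -
  define n where "n = m - l + i"
  have n: "m - l + Suc i = Suc n" "1 \<le> n" "Suc n \<le> m"
    using assms unfolding n_def by auto
  let ?p = "tilde_F F m t n" and ?ps = "replicate n (tilde_F F m t n)"
  have p: "?p \<in> {0..1}" "tilde_F F m t (Suc n) \<in> {0..1}"
    using tilde_F_unit n by auto
  then have tail_dec: "pbin_tail ?ps (Suc i) \<le> pbin_tail ?ps i"
    by (intro pbin_tail_Suc_le) auto
  have "Q F m t l (Suc i) = pbin_tail (replicate (Suc n) (tilde_F F m t (Suc n))) (Suc i)"
    using Q_eq_pbin_tail[of l "Suc i"] n by simp
  also have "\<dots> \<le> pbin_tail (replicate (Suc n) ?p) (Suc i)"
    using p tilde_F_Suc_le[OF n(2,3)]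
    by (intro pbin_tail_mono) (auto simp: list_all2_conv_all_nth simp del: replicate_Suc)
  also have "\<dots> = ?p * pbin_tail ?ps i + (1 - ?p) * pbin_tail ?ps (Suc i)"
    by simp
  also have "\<dots> \<le> ?p * pbin_tail ?ps i + (1 - ?p) * pbin_tail ?ps i"
    using p tail_dec by (intro add_left_mono mult_left_mono) auto
  also have "\<dots> = Q F m t l i"
    using Q_eq_pbin_tail[of l i] n unfolding n_def by (simp add: algebra_simps)
  finally show ?thesis .
qed

lemma Q_Suc_left_le:
  assumes "1 \<le> i" "i \<le> l" "Suc l \<le> m"
  shows "Q F m t (Suc l) i \<le> Q F m t l i"
proof -
  define n where "n = m - Suc l + i"
  have n: "m - l + i = Suc n" "1 \<le> n" "Suc n \<le> m"
    using assms unfolding n_def by auto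
  obtain s where s: "0 \<le> s" "s \<le> 1" "tilde_F F m t n = 1 - s ^ Suc n"
    and s_le: "1 - s ^ n \<le> tilde_F F m t (Suc n)"
    using tilde_F_Suc_ge[OF n(2,3)] .
  have p: "1 - s ^ n \<in> {0..1}" "tilde_F F m t (Suc n) \<in> {0..1}"
    using s tilde_F_unit n by (auto simp: power_le_one)
  have "Q F m t (Suc l) i = pbin_tail (replicate n (1 - s ^ Suc n)) i"
    using Q_eq_pbin_tail[of "Suc l" i] n s(3) unfolding n_def by simp
  also have "\<dots> \<le> pbin_tail (replicate (Suc n) (1 - s ^ n)) i"
    using s(1,2) by (rule pbin_tail_replicate_le_replicate_Suc)
  also have "\<dots> \<le> pbin_tail (replicate (Suc n) (tilde_F F m t (Suc n))) i"
    using p s_le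
    by (intro pbin_tail_mono) (auto simp: list_all2_conv_all_nth simp del: replicate_Suc)
  also have "\<dots> = Q F m t l i"
    using Q_eq_pbin_tail[of l i] n by simp
  finally show ?thesis .
qed

end

lemma nat_floor_mult_less:
  fixes \<alpha> :: real
  assumes "\<alpha> < 1" "0 < l"
  shows "nat \<lfloor>\<alpha> * real l\<rfloor> < l"
proof -
  have "\<alpha> * real l < real l"
    using assms by simp
  then show ?thesis
    using assms by linarith
qed

theorem lemma7p2:
  fixes F :: "nat \<Rightarrow> real \<Rightarrow> real" and m :: nat and \<alpha> t :: real
  assumes "m \<ge> 1" and "0 < \<alpha>" and "\<alpha> < 1"
    and "\<forall>k\<in>{1..m}. \<forall>x\<in>{0..1}. 0 \<le> F k x \<and> F k x \<le> 1"
    and "0 \<le> t" and "t \<le> 1"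
  shows "(\<forall>l\<in>{1..m}. \<forall>i1 i2. 1 \<le> i1 \<and> i1 \<le> i2 \<and> i2 \<le> nat \<lfloor>\<alpha> * real l\<rfloor> + 1
            \<longrightarrow> Q F m t l i2 \<le> Q F m t l i1)
       \<and> (\<forall>l1 l2 i. 1 \<le> l1 \<and> l1 \<le> l2 \<and> l2 \<le> m \<and> 1 \<le> i
            \<and> i \<le> nat \<lfloor>\<alpha> * real l1\<rfloor> + 1 \<and> i \<le> nat \<lfloor>\<alpha> * real l2\<rfloor> + 1
            \<longrightarrow> Q F m t l2 i \<le> Q F m t l1 i)"
proof -
  have F_unit: "\<forall>k\<in>{1..m}. F k t \<in> {0..1}"
    using assms(4-6) by auto
  have i_le_l: "i \<le> l" if "1 \<le> l" "i \<le> nat \<lfloor>\<alpha> * real l\<rfloor> + 1" for i l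
    using nat_floor_mult_less[OF assms(3), of l] that by simp
  show ?thesis
  proof (intro conjI ballI allI impI)
    fix l i1 i2
    assume l: "l \<in> {1..m}"
      and i: "1 \<le> i1 \<and> i1 \<le> i2 \<and> i2 \<le> nat \<lfloor>\<alpha> * real l\<rfloor> + 1"
    then have "i2 \<le> l"
      using i_le_l[of l i2] by simp
    then have step: "Q F m t l (Suc i) \<le> Q F m t l i" if "i \<in> {i1..<i2}" for i
      using F_unit that l i by (intro Q_Suc_right_le) simp_all
    show "Q F m t l i2 \<le> Q F m t l i1"
      by (rule lift_Suc_antimono_le_ivl[where f = "Q F m t l" and N = "{i1..<i2}"])
        (use step i in auto)
  next
    fix l1 l2 i
    assume h: "1 \<le> l1 \<and> l1 \<le> l2 \<and> l2 \<le> m \<and> 1 \<le> i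
      \<and> i \<le> nat \<lfloor>\<alpha> * real l1\<rfloor> + 1 \<and> i \<le> nat \<lfloor>\<alpha> * real l2\<rfloor> + 1"
    then have "i \<le> l1"
      using i_le_l[of l1 i] by simp
    then have step: "Q F m t (Suc l) i \<le> Q F m t l i" if "l \<in> {l1..<l2}" for l
      using F_unit that h by (intro Q_Suc_left_le) simp_all
    show "Q F m t l2 i \<le> Q F m t l1 i"
      by (rule lift_Suc_antimono_le_ivl[where f = "\<lambda>l. Q F m t l i" and N = "{l1..<l2}"])
        (use step h in auto)
  qed
qed

end
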